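(* Let $G$ be a graph with a linear order $<$ on $V(G)$ satisfying the X-property, let $s<t$ be vertices with $d^*:=\operatorname{dist}(s,t)<\infty$, and let $d$ be an integer. Each of the following conditions implies $d^*\le d$: (i) $\beta_s(\sigma)=\beta_t(\tau)$ for some nonnegative integers $\sigma,\tau$ with $\sigma+\tau=d$; (ii) $G$ contains an edge between $\alpha_s(\sigma)$ and $\alpha_t(\tau)$ for some nonnegative integers $\sigma,\tau$ with $\sigma+\tau=d-1$; (iii) there are nonnegative integers $\sigma,\tau$ with $\sigma+\tau=d-3$ and vertices $v\in\{\alpha_s(\sigma),\beta_s(\sigma)\}$, $w\in\{\alpha_t(\tau),\beta_t(\tau)\}$ with $v<w$, $\operatorname{rhorizon}(v)\ge t$ and $\operatorname{lhorizon}(w)\le s$.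
   Context: The X-property: for all vertices $p<q<r<s$, if $\{p,r\}\in E(G)$ and $\{q,s\}\in E(G)$ then $\{p,s\}\in E(G)$. $N[v]$ is the closed neighborhood; $\operatorname{lhorizon}(v):=\min N[v]$ and $\operatorname{rhorizon}(v):=\max N[v]$ w.r.t. $<$. For an integer $k\ge 0$: $\alpha_s(k)$ (resp. $\beta_s(k)$) is the leftmost (resp. rightmost) vertex reachable from $s$ by a path of length at most $k$ using only vertices $v\le t$; $\alpha_t(k)$ (resp. $\beta_t(k)$) is the rightmost (resp. leftmost) vertex reachable from $t$ by a path of length at most $k$ using only vertices $v\ge s$. *)

theory Defs
  imports Main
begin

definition simple_graph :: "'a set \<Rightarrow> ('a \<Rightarrow> 'a \<Rightarrow> bool) \<Rightarrow> bool" where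
  "simple_graph V E \<longleftrightarrow> finite V \<and> (\<forall>u v. E u v \<longrightarrow> u \<in> V \<and> v \<in> V)
     \<and> (\<forall>u v. E u v \<longrightarrow> E v u) \<and> (\<forall>v. \<not> E v v)"

definition X_property :: "'a::linorder set \<Rightarrow> ('a \<Rightarrow> 'a \<Rightarrow> bool) \<Rightarrow> bool" where
  "X_property V E \<longleftrightarrow> (\<forall>p\<in>V. \<forall>q\<in>V. \<forall>r\<in>V. \<forall>s\<in>V.
      p < q \<and> q < r \<and> r < s \<and> E p r \<and> E q s \<longrightarrow> E p s)"

text \<open>A path (as a list of distinct vertices) all of whose vertices lie in S;
  its length is the number of edges, i.e. length xs - 1.\<close>
definition path_in :: "('a \<Rightarrow> 'a \<Rightarrow> bool) \<Rightarrow> 'a set \<Rightarrow> 'a list \<Rightarrow> bool" where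
  "path_in E S xs \<longleftrightarrow> xs \<noteq> [] \<and> distinct xs \<and> set xs \<subseteq> S
     \<and> (\<forall>i. Suc i < length xs \<longrightarrow> E (xs ! i) (xs ! Suc i))"

definition reach_le :: "('a \<Rightarrow> 'a \<Rightarrow> bool) \<Rightarrow> 'a set \<Rightarrow> nat \<Rightarrow> 'a \<Rightarrow> 'a \<Rightarrow> bool" where
  "reach_le E S k x y \<longleftrightarrow> (\<exists>xs. path_in E S xs \<and> hd xs = x \<and> last xs = y \<and> length xs \<le> Suc k)"

definition gdist :: "'a set \<Rightarrow> ('a \<Rightarrow> 'a \<Rightarrow> bool) \<Rightarrow> 'a \<Rightarrow> 'a \<Rightarrow> nat" where
  "gdist V E x y = (LEAST k. reach_le E V k x y)"

definition connected_pair :: "'a set \<Rightarrow> ('a \<Rightarrow> 'a \<Rightarrow> bool) \<Rightarrow> 'a \<Rightarrow> 'a \<Rightarrow> bool" where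
  "connected_pair V E x y \<longleftrightarrow> (\<exists>k. reach_le E V k x y)"

definition lhorizon :: "'a::linorder set \<Rightarrow> ('a \<Rightarrow> 'a \<Rightarrow> bool) \<Rightarrow> 'a \<Rightarrow> 'a" where
  "lhorizon V E v = Min ({v} \<union> {u \<in> V. E v u})"

definition rhorizon :: "'a::linorder set \<Rightarrow> ('a \<Rightarrow> 'a \<Rightarrow> bool) \<Rightarrow> 'a \<Rightarrow> 'a" where
  "rhorizon V E v = Max ({v} \<union> {u \<in> V. E v u})"

definition alpha_s :: "'a::linorder set \<Rightarrow> ('a \<Rightarrow> 'a \<Rightarrow> bool) \<Rightarrow> 'a \<Rightarrow> 'a \<Rightarrow> nat \<Rightarrow> 'a" where
  "alpha_s V E s t k = Min {v. reach_le E {u \<in> V. u \<le> t} k s v}"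

definition beta_s :: "'a::linorder set \<Rightarrow> ('a \<Rightarrow> 'a \<Rightarrow> bool) \<Rightarrow> 'a \<Rightarrow> 'a \<Rightarrow> nat \<Rightarrow> 'a" where
  "beta_s V E s t k = Max {v. reach_le E {u \<in> V. u \<le> t} k s v}"

definition alpha_t :: "'a::linorder set \<Rightarrow> ('a \<Rightarrow> 'a \<Rightarrow> bool) \<Rightarrow> 'a \<Rightarrow> 'a \<Rightarrow> nat \<Rightarrow> 'a" where
  "alpha_t V E s t k = Max {v. reach_le E {u \<in> V. s \<le> u} k t v}"

definition beta_t :: "'a::linorder set \<Rightarrow> ('a \<Rightarrow> 'a \<Rightarrow> bool) \<Rightarrow> 'a \<Rightarrow> 'a \<Rightarrow> nat \<Rightarrow> 'a" where
  "beta_t V E s t k = Min {v. reach_le E {u \<in> V. s \<le> u} k t v}"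

end

theory Submission
  imports Defs
begin

text \<open>Each condition yields a walk from \<open>s\<close> to \<open>t\<close> of length at most \<open>d\<close>, and walks
  shorten to paths. For (i) and (ii) the walk is read off directly. For (iii), one more step
  turns the walk from \<open>s\<close> to \<open>v\<close> into a walk ending right of \<open>t\<close>, and the walk from \<open>t\<close>
  to \<open>w\<close> into one ending left of \<open>s\<close>. By the X-property, two walks crossing \<open>[s, t]\<close> in
  opposite directions share a vertex or are joined by an edge, which gives a walk of length
  \<open>\<sigma> + \<tau> + 3\<close>.\<close>

definition walk :: "('a \<Rightarrow> 'a \<Rightarrow> bool) \<Rightarrow> 'a set \<Rightarrow> 'a list \<Rightarrow> bool" where
  "walk E S xs \<longleftrightarrow> xs \<noteq> [] \<and> set xs \<subseteq> S \<and> successively E xs"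

definition walk_le :: "('a \<Rightarrow> 'a \<Rightarrow> bool) \<Rightarrow> 'a set \<Rightarrow> nat \<Rightarrow> 'a \<Rightarrow> 'a \<Rightarrow> bool" where
  "walk_le E S k x y \<longleftrightarrow> (\<exists>xs. walk E S xs \<and> hd xs = x \<and> last xs = y \<and> length xs \<le> Suc k)"

lemma path_in_iff_walk: "path_in E S xs \<longleftrightarrow> walk E S xs \<and> distinct xs"
  unfolding path_in_def walk_def successively_conv_nth by blast

lemma walk_appendD: "walk E S (xs @ ys) \<Longrightarrow> xs \<noteq> [] \<Longrightarrow> walk E S xs"
  by (simp add: walk_def successively_append_iff)

lemma walk_edge_at: "walk E S (xs @ a # b # ys) \<Longrightarrow> E a b"
  by (simp add: walk_def successively_append_iff)

lemma walk_shortcut: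
  assumes "walk E S xs"
  shows "\<exists>ys. walk E S ys \<and> distinct ys \<and> hd ys = hd xs \<and> last ys = last xs \<and> length ys \<le> length xs"
  using assms
proof (induction xs rule: length_induct)
  case (1 xs)
  show ?case
  proof (cases "distinct xs")
    case True
    with "1.prems" show ?thesis by blast
  next
    case False
    then obtain as y bs cs where xs: "xs = as @ [y] @ bs @ [y] @ cs"
      using not_distinct_decomp by blast
    let ?zs = "as @ y # cs"
    have "walk E S ?zs"
      using "1.prems" unfolding xs walk_def
      by (auto simp: successively_append_iff successively_Cons)
    moreover have "length ?zs < length xs" "hd ?zs = hd xs" "last ?zs = last xs"
      using xs by (auto simp: hd_append)
    ultimately show ?thesis
      using "1.IH" by (metis order.strict_implies_order order.trans)
  qed
qed

lemma reach_le_iff_walk_le: "reach_le E S k x y \<longleftrightarrow> walk_le E S k x y"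
  unfolding reach_le_def walk_le_def path_in_iff_walk
  by (meson le_trans walk_shortcut)

lemma walk_le_in: "walk_le E S k x y \<Longrightarrow> x \<in> S \<and> y \<in> S"
  unfolding walk_le_def walk_def by (metis hd_in_set last_in_set subsetD)

lemma walk_le_refl: "x \<in> S \<Longrightarrow> walk_le E S k x x"
  unfolding walk_le_def walk_def by (intro exI[of _ "[x]"]) auto

lemma walk_le_edge: "x \<in> S \<Longrightarrow> y \<in> S \<Longrightarrow> E x y \<Longrightarrow> walk_le E S 1 x y"
  unfolding walk_le_def walk_def by (intro exI[of _ "[x, y]"]) auto

lemma walk_le_mono: "walk_le E S k x y \<Longrightarrow> S \<subseteq> S' \<Longrightarrow> k \<le> k' \<Longrightarrow> walk_le E S' k' x y"
  unfolding walk_le_def walk_def by (metis Suc_le_mono le_trans order_trans)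

lemma walk_le_trans:
  assumes "walk_le E S a x y" "walk_le E S b y z"
  shows "walk_le E S (a + b) x z"
proof -
  obtain xs where xs: "walk E S xs" "hd xs = x" "last xs = y" "length xs \<le> Suc a"
    using assms(1) unfolding walk_le_def by blast
  obtain ys where ys: "walk E S ys" "hd ys = y" "last ys = z" "length ys \<le> Suc b"
    using assms(2) unfolding walk_le_def by blast
  have ys_eq: "ys = y # tl ys"
    using ys by (metis list.collapse walk_def)
  have "successively E (y # tl ys)"
    using ys(1) ys_eq unfolding walk_def by metis
  then have "walk E S (xs @ tl ys)"
    using xs ys unfolding walk_def
    by (auto simp: successively_append_iff successively_Cons dest: list.set_sel(2))
  moreover have "last (xs @ tl ys) = z"
    using xs ys ys_eq by (metis append_Nil2 last.simps last_appendR)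
  moreover have "hd (xs @ tl ys) = x" "length (xs @ tl ys) \<le> Suc (a + b)"
    using xs ys unfolding walk_def by auto
  ultimately show ?thesis
    unfolding walk_le_def by blast
qed

lemma walk_le_sym:
  assumes "symp E" "walk_le E S k x y"
  shows "walk_le E S k y x"
proof -
  obtain xs where "walk E S xs" "hd xs = x" "last xs = y" "length xs \<le> Suc k"
    using assms(2) unfolding walk_le_def by blast
  moreover have "successively E (rev xs)"
    using \<open>walk E S xs\<close> assms(1) unfolding walk_def by (auto intro: successively_mono dest: sympD)
  ultimately show ?thesis
    unfolding walk_le_def walk_def by (intro exI[of _ "rev xs"]) (auto simp: hd_rev last_rev)
qed

lemma walk_le_to_member:
  assumes "walk E S xs" "z \<in> set xs"
  shows "walk_le E S (length xs - 1) (hd xs) z"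
proof -
  obtain i where i: "i < length xs" "xs ! i = z"
    using assms(2) by (meson in_set_conv_nth)
  have "walk E S (take (Suc i) xs @ drop (Suc i) xs)"
    using assms(1) by simp
  then have "walk E S (take (Suc i) xs)"
    by (rule walk_appendD) (use i in auto)
  moreover have "hd (take (Suc i) xs) = hd xs"
    by (simp add: hd_take)
  moreover have "last (take (Suc i) xs) = z"
    using i by (simp add: take_Suc_conv_app_nth)
  ultimately show ?thesis
    unfolding walk_le_def by (intro exI[of _ "take (Suc i) xs"]) auto
qed

lemma gdist_le_walk_le: "walk_le E V k x y \<Longrightarrow> gdist V E x y \<le> k"
  unfolding gdist_def reach_le_iff_walk_le[symmetric] by (rule Least_le)

lemma reach_le_Min_Max:
  assumes "finite S" "x \<in> S"
  shows "reach_le E S k x (Min {v. reach_le E S k x v})"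
    and "reach_le E S k x (Max {v. reach_le E S k x v})"
proof -
  have "{v. reach_le E S k x v} \<subseteq> S"
    using walk_le_in by (metis mem_Collect_eq reach_le_iff_walk_le subsetI)
  then have "finite {v. reach_le E S k x v}"
    using assms(1) finite_subset by blast
  moreover have "reach_le E S k x x"
    using assms(2) by (simp add: reach_le_iff_walk_le walk_le_refl)
  ultimately show "reach_le E S k x (Min {v. reach_le E S k x v})"
    and "reach_le E S k x (Max {v. reach_le E S k x v})"
    using Min_in Max_in by fastforce+
qed

lemma walk_le_alpha_beta_s:
  assumes "finite V" "s \<in> V" "s \<le> t"
  shows "walk_le E V k s (alpha_s V E s t k)" "walk_le E V k s (beta_s V E s t k)"
  using reach_le_Min_Max[of "{u \<in> V. u \<le> t}" s E k] assms
  unfolding alpha_s_def beta_s_def reach_le_iff_walk_le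
  by (auto elim: walk_le_mono)

lemma walk_le_alpha_beta_t:
  assumes "finite V" "t \<in> V" "s \<le> t"
  shows "walk_le E V k t (alpha_t V E s t k)" "walk_le E V k t (beta_t V E s t k)"
  using reach_le_Min_Max[of "{u \<in> V. s \<le> u}" t E k] assms
  unfolding alpha_t_def beta_t_def reach_le_iff_walk_le
  by (auto elim: walk_le_mono)

lemma list_split_at_change:
  assumes "xs \<noteq> []" "\<not> P (hd xs)" "P (last xs)"
  shows "\<exists>ys a b zs. xs = ys @ a # b # zs \<and> \<not> P a \<and> P b"
  using assms
proof (induction xs)
  case (Cons x xs)
  then have "xs \<noteq> []"
    by auto
  show ?case
  proof (cases "P (hd xs)")
    case True
    with Cons.prems \<open>xs \<noteq> []\<close> show ?thesis
      by (intro exI[of _ "[]"] exI[of _ x] exI[of _ "hd xs"] exI[of _ "tl xs"]) auto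
  next
    case False
    with Cons.IH Cons.prems \<open>xs \<noteq> []\<close> obtain ys a b zs
      where "xs = ys @ a # b # zs" "\<not> P a" "P b"
      by auto
    then show ?thesis
      by (intro exI[of _ "x # ys"]) auto
  qed
qed simp

lemma X_propertyD:
  "X_property V E \<Longrightarrow> {p, q, r, s} \<subseteq> V \<Longrightarrow> p < q \<Longrightarrow> q < r \<Longrightarrow> r < s \<Longrightarrow>
    E p r \<Longrightarrow> E q s \<Longrightarrow> E p s"
  unfolding X_property_def by blast

text \<open>By the X-property, the step at which the walk leaves the span of \<open>ab\<close> ends at a
  neighbour of \<open>a\<close> or \<open>b\<close>.\<close>

lemma walk_leaving_edge_span:
  assumes X: "X_property V E" and sym: "symp E"
    and ab: "a < b" "E a b" "a \<in> V" "b \<in> V"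
    and xs: "walk E V xs" "a < hd xs" "hd xs < b" "\<not> (a < last xs \<and> last xs < b)"
  shows "\<exists>z\<in>set xs. \<exists>u\<in>{a, b}. z = u \<or> E z u"
proof -
  obtain ys x y zs where split: "xs = ys @ x # y # zs" "a < x" "x < b" "\<not> (a < y \<and> y < b)"
    using list_split_at_change[of xs "\<lambda>z. \<not> (a < z \<and> z < b)"] xs
    unfolding walk_def by auto
  have "E x y"
    using xs(1) split(1) walk_edge_at by metis
  have V: "{a, b, x, y} \<subseteq> V"
    using xs(1) ab(3,4) unfolding split(1) walk_def by auto
  consider "y = a" | "y = b" | "y < a" | "b < y"
    using split(4) by fastforce
  then have "\<exists>u\<in>{a, b}. y = u \<or> E y u"
  proof cases
    case 3
    from V have "{y, a, x, b} \<subseteq> V"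
      by auto
    then have "E y b"
      using X_propertyD[OF X _ 3 split(2,3) sympD[OF sym \<open>E x y\<close>] ab(2)] by blast
    then show ?thesis by blast
  next
    case 4
    from V have "{a, x, b, y} \<subseteq> V"
      by auto
    then have "E a y"
      using X_propertyD[OF X _ split(2,3) 4 ab(2) \<open>E x y\<close>] by blast
    then show ?thesis
      using sympD[OF sym] by blast
  qed auto
  then show ?thesis
    using split(1) by auto
qed

text \<open>Here \<open>ab\<close> is a step at which a walk from \<open>s\<close> passes \<open>t\<close>, and \<open>dc\<close> one at which
  a walk from \<open>t\<close> passes \<open>s\<close>. If \<open>d\<close> lies outside the span of \<open>ab\<close>, the walk from \<open>t\<close> leaves that span;
  otherwise either \<open>c < a\<close> and the X-property joins \<open>c\<close> and \<open>b\<close>, or the walk from \<open>s\<close>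
  leaves the span of \<open>cd\<close>.\<close>

lemma crossing_steps_meet:
  assumes X: "X_property V E" and sym: "symp E"
    and P: "walk E V (ys @ [a])" "hd (ys @ [a]) = s" "E a b" "b \<in> V" "a < t" "t < b"
    and Q: "walk E V (us @ [d])" "hd (us @ [d]) = t" "E d c" "c \<in> V" "c < s" "s < d"
  shows "\<exists>x\<in>set (ys @ [a, b]). \<exists>y\<in>set (us @ [d, c]). x = y \<or> E x y"
proof -
  have V: "a \<in> V" "d \<in> V"
    using P(1) Q(1) unfolding walk_def by auto
  show ?thesis
  proof (cases "a < d \<and> d < b")
    case False
    have "a < b" "a < hd (us @ [d])" "hd (us @ [d]) < b"
      "\<not> (a < last (us @ [d]) \<and> last (us @ [d]) < b)"
      using False P(5,6) Q(2) by auto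
    then obtain z u where "z \<in> set (us @ [d])" "u \<in> {a, b}" "z = u \<or> E z u"
      using walk_leaving_edge_span[OF X sym _ P(3) V(1) P(4) Q(1)] by blast
    with sympD[OF sym, of z u] show ?thesis
      by auto
  next
    case True
    then have "a < d" "d < b"
      by auto
    consider "c < a" | "c = a" | "a < c"
      by fastforce
    then show ?thesis
    proof cases
      case 1
      have "{c, a, d, b} \<subseteq> V"
        using V P(4) Q(4) by auto
      then have "E c b"
        using X_propertyD[OF X _ 1 \<open>a < d\<close> \<open>d < b\<close> sympD[OF sym Q(3)] P(3)] by blast
      with sympD[OF sym, of c b] show ?thesis
        by auto
    next
      case 3
      have "c < d" "c < hd (ys @ [a])" "hd (ys @ [a]) < d"
        "\<not> (c < last (ys @ [a]) \<and> last (ys @ [a]) < d)"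
        using 3 P(2) Q(5,6) by auto
      then obtain z u where "z \<in> set (ys @ [a])" "u \<in> {c, d}" "z = u \<or> E z u"
        using walk_leaving_edge_span[OF X sym _ sympD[OF sym Q(3)] Q(4) V(2) P(1)] by blast
      then show ?thesis
        by auto
    qed auto
  qed
qed

lemma crossing_walks_meet:
  fixes s t :: "'a::linorder"
  assumes X: "X_property V E" and sym: "symp E" and "s < t"
    and P: "walk E V P" "hd P = s" "t \<le> last P"
    and Q: "walk E V Q" "hd Q = t" "last Q \<le> s"
  shows "\<exists>x\<in>set P. \<exists>y\<in>set Q. x = y \<or> E x y"
proof -
  have "P \<noteq> []" "Q \<noteq> []"
    using P(1) Q(1) unfolding walk_def by auto
  obtain ys a b zs where P_split: "P = ys @ a # b # zs" "a < t" "t \<le> b"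
    using list_split_at_change[of P "\<lambda>x. t \<le> x"] \<open>P \<noteq> []\<close> P(2,3) \<open>s < t\<close>
    by (auto simp: not_le)
  obtain us d c ws where Q_split: "Q = us @ d # c # ws" "s < d" "c \<le> s"
    using list_split_at_change[of Q "\<lambda>x. x \<le> s"] \<open>Q \<noteq> []\<close> Q(2,3) \<open>s < t\<close>
    by (auto simp: not_le)
  show ?thesis
  proof (cases "b = t \<or> c = s")
    case True
    moreover have "s \<in> set P" "t \<in> set Q"
      using P(2) Q(2) hd_in_set \<open>P \<noteq> []\<close> \<open>Q \<noteq> []\<close> by blast+
    ultimately show ?thesis
      unfolding P_split(1) Q_split(1) by auto
  next
    case False
    with P_split(3) Q_split(3) have "t < b" "c < s"
      by auto
    have "\<exists>x\<in>set (ys @ [a, b]). \<exists>y\<in>set (us @ [d, c]). x = y \<or> E x y"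
    proof (rule crossing_steps_meet[OF X sym])
      show "walk E V (ys @ [a])"
        using P(1) walk_appendD[of E V "ys @ [a]" "b # zs"] unfolding P_split(1) by simp
      show "walk E V (us @ [d])"
        using Q(1) walk_appendD[of E V "us @ [d]" "c # ws"] unfolding Q_split(1) by simp
      show "hd (ys @ [a]) = s" "hd (us @ [d]) = t"
        using P(2) Q(2) unfolding P_split(1) Q_split(1) by (auto simp: hd_append)
      show "E a b" "E d c"
        using P(1) Q(1) walk_edge_at unfolding P_split(1) Q_split(1) by metis+
      show "b \<in> V" "c \<in> V"
        using P(1) Q(1) unfolding P_split(1) Q_split(1) walk_def by auto
      show "a < t" "t < b" "c < s" "s < d"
        using P_split(2) Q_split(2) \<open>t < b\<close> \<open>c < s\<close> by auto
    qed
    then show ?thesis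
      unfolding P_split(1) Q_split(1) by auto
  qed
qed

lemma rhorizon_geD:
  "finite V \<Longrightarrow> t \<le> rhorizon V E v \<Longrightarrow> t \<le> v \<or> (\<exists>u\<in>V. E v u \<and> t \<le> u)"
  unfolding rhorizon_def using Max_in[of "{v} \<union> {u \<in> V. E v u}"] by fastforce

lemma lhorizon_leD:
  "finite V \<Longrightarrow> lhorizon V E v \<le> s \<Longrightarrow> v \<le> s \<or> (\<exists>u\<in>V. E v u \<and> u \<le> s)"
  unfolding lhorizon_def using Min_in[of "{v} \<union> {u \<in> V. E v u}"] by fastforce

lemma walk_le_extend:
  assumes "walk_le E V k x v" "G v \<or> (\<exists>u\<in>V. E v u \<and> G u)"
  shows "\<exists>y. walk_le E V (Suc k) x y \<and> G y"
  using assms walk_le_mono[OF assms(1) order_refl, of "Suc k"]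
    walk_le_trans[OF assms(1) walk_le_edge] walk_le_in by fastforce

lemma gdist_le_horizons:
  fixes s t :: "'a::linorder"
  assumes fin: "finite V" and sym: "symp E" and X: "X_property V E" and "s < t"
    and v: "walk_le E V \<sigma> s v" "t \<le> rhorizon V E v"
    and w: "walk_le E V \<tau> t w" "lhorizon V E w \<le> s"
  shows "gdist V E s t \<le> \<sigma> + \<tau> + 3"
proof -
  obtain x where "walk_le E V (Suc \<sigma>) s x" "t \<le> x"
    using walk_le_extend[OF v(1) rhorizon_geD[OF fin v(2)]] by blast
  then obtain P where P: "walk E V P" "hd P = s" "t \<le> last P" "length P \<le> Suc (Suc \<sigma>)"
    unfolding walk_le_def by blast
  obtain y where "walk_le E V (Suc \<tau>) t y" "y \<le> s"
    using walk_le_extend[OF w(1) lhorizon_leD[OF fin w(2)]] by blast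
  then obtain Q where Q: "walk E V Q" "hd Q = t" "last Q \<le> s" "length Q \<le> Suc (Suc \<tau>)"
    unfolding walk_le_def by blast
  obtain x' y' where meet: "x' \<in> set P" "y' \<in> set Q" "x' = y' \<or> E x' y'"
    using crossing_walks_meet[OF X sym \<open>s < t\<close> P(1-3) Q(1-3)] by blast
  have sx': "walk_le E V (Suc \<sigma>) s x'"
    using walk_le_mono[OF walk_le_to_member[OF P(1) meet(1)] subset_refl] P(2,4) by simp
  have "x' \<in> V" "y' \<in> V"
    using meet P(1) Q(1) unfolding walk_def by auto
  with meet(3) have x'y': "walk_le E V 1 x' y'"
    using walk_le_refl[of y' V E 1] walk_le_edge[of x' V y' E] by blast
  have "walk_le E V (Suc \<tau>) t y'"
    using walk_le_mono[OF walk_le_to_member[OF Q(1) meet(2)] subset_refl] Q(2,4) by simp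
  with sym have y't: "walk_le E V (Suc \<tau>) y' t"
    by (rule walk_le_sym)
  have "walk_le E V (Suc \<sigma> + 1 + Suc \<tau>) s t"
    by (rule walk_le_trans[OF walk_le_trans[OF sx' x'y'] y't])
  then show ?thesis
    using gdist_le_walk_le by fastforce
qed

theorem lemma12:
  fixes V :: "'a::linorder set" and E :: "'a \<Rightarrow> 'a \<Rightarrow> bool"
    and s t :: 'a and d :: int
  assumes "simple_graph V E" and "X_property V E"
    and "s \<in> V" and "t \<in> V" and "s < t"
    and "connected_pair V E s t"
  shows "((\<exists>\<sigma> \<tau> :: nat. int \<sigma> + int \<tau> = d \<and> beta_s V E s t \<sigma> = beta_t V E s t \<tau>)
           \<longrightarrow> int (gdist V E s t) \<le> d)
       \<and> ((\<exists>\<sigma> \<tau> :: nat. int \<sigma> + int \<tau> = d - 1 \<and> E (alpha_s V E s t \<sigma>) (alpha_t V E s t \<tau>))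
           \<longrightarrow> int (gdist V E s t) \<le> d)
       \<and> ((\<exists>\<sigma> \<tau> :: nat. \<exists>v w. int \<sigma> + int \<tau> = d - 3
             \<and> v \<in> {alpha_s V E s t \<sigma>, beta_s V E s t \<sigma>}
             \<and> w \<in> {alpha_t V E s t \<tau>, beta_t V E s t \<tau>}
             \<and> v < w \<and> t \<le> rhorizon V E v \<and> lhorizon V E w \<le> s)
           \<longrightarrow> int (gdist V E s t) \<le> d)"
proof -
  have fin: "finite V" and sym: "symp E" and E_V: "\<And>u v. E u v \<Longrightarrow> u \<in> V \<and> v \<in> V"
    using assms(1) unfolding simple_graph_def symp_def by auto
  note from_s = walk_le_alpha_beta_s[OF fin assms(3) less_imp_le[OF assms(5)], of E]
  note from_t = walk_le_alpha_beta_t[OF fin assms(4) less_imp_le[OF assms(5)], of E]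
  note to_t = walk_le_sym[OF sym from_t(1)] walk_le_sym[OF sym from_t(2)]
  show ?thesis
  proof (intro conjI impI; elim exE conjE)
    fix \<sigma> \<tau>
    assume "int \<sigma> + int \<tau> = d" and meet: "beta_s V E s t \<sigma> = beta_t V E s t \<tau>"
    with gdist_le_walk_le[OF walk_le_trans[OF from_s(2) to_t(2)[of \<tau>, folded meet]]]
    show "int (gdist V E s t) \<le> d"
      by linarith
  next
    fix \<sigma> \<tau>
    assume "int \<sigma> + int \<tau> = d - 1" and edge: "E (alpha_s V E s t \<sigma>) (alpha_t V E s t \<tau>)"
    have "walk_le E V 1 (alpha_s V E s t \<sigma>) (alpha_t V E s t \<tau>)"
      by (rule walk_le_edge) (use E_V[OF edge] edge in auto)
    with \<open>int \<sigma> + int \<tau> = d - 1\<close> gdist_le_walk_le[OF walk_le_trans[OF walk_le_trans[OF from_s(1) this] to_t(1)]]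
    show "int (gdist V E s t) \<le> d"
      by linarith
  next
    fix \<sigma> \<tau> v w
    assume "int \<sigma> + int \<tau> = d - 3"
      and "v \<in> {alpha_s V E s t \<sigma>, beta_s V E s t \<sigma>}" "w \<in> {alpha_t V E s t \<tau>, beta_t V E s t \<tau>}"
      and horizons: "t \<le> rhorizon V E v" "lhorizon V E w \<le> s"
    then have "walk_le E V \<sigma> s v" "walk_le E V \<tau> t w"
      using from_s[of \<sigma>] from_t[of \<tau>] by auto
    with \<open>int \<sigma> + int \<tau> = d - 3\<close> gdist_le_horizons[OF fin sym assms(2,5) _ horizons(1) _ horizons(2)]
    show "int (gdist V E s t) \<le> d"
      by fastforce
  qed
qed

end
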